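(* Let $\overline{H}_n = \sum_{j=1}^n \frac{(-1)^{j-1}}{j}$, let $\{x\} = x - \lfloor x \rfloor$ denote the fractional part, let $\operatorname{Ein}(z) = \int_0^z \frac{1 - e^{-t}}{t}\,dt$, let $\gamma$ be the Euler–Mascheroni constant and let $\delta = \int_0^\infty \frac{e^{-x}}{1+x}\,dx$ be the Euler–Gompertz constant. Then $$\sum_{n = 1}^\infty \frac{\overline{H}_n \{n!\, e \}}{n!} = e \left[\operatorname{Ein}(2) - \gamma\right] - \cosh(1) - \delta + 1.$$ *)

theory Defs
  imports "HOL-Analysis.Analysis"
begin

definition alt_harm :: "nat \<Rightarrow> real" where
  "alt_harm n = (\<Sum>j=1..n. (-1) ^ (j - 1) / real j)"

definition Ein :: "real \<Rightarrow> real" where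
  "Ein z = integral {0..z} (\<lambda>t. (1 - exp (-t)) / t)"

definition euler_gompertz :: real where
  "euler_gompertz = integral {0..} (\<lambda>x. exp (-x) / (1 + x))"

end

theory Submission
  imports Defs
begin

text \<open>
  Put \<open>a\<^sub>n = alt_harm n\<close> and \<open>r\<^sub>n = e - (\<Sum>i\<le>n. 1/i!)\<close>. Since \<open>n! e\<close> is the integer
  \<open>\<Sum>i\<le>n. n!/i!\<close> plus \<open>n! r\<^sub>n \<in> (0, 1)\<close>, the series is \<open>\<Sum> a\<^sub>n r\<^sub>n\<close>. Summation by parts
  with \<open>\<Sum>j\<le>n. a\<^sub>j = (n + 1) a\<^sub>n - [n odd]\<close> turns it into \<open>\<Sum> a\<^sub>m/m! - (cosh 1 - 1)\<close>.
  The representation \<open>a\<^sub>m = \<integral>\<^sub>1\<^sup>2 (1 - (1 - t)\<^sup>m)/t dt\<close> and dominated convergence give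
  \<open>\<Sum> a\<^sub>m/m! = e (Ein 2 - Ein 1)\<close>. Finally \<open>\<gamma> = Ein 1 - \<delta>/e\<close>: split
  \<open>harm n = \<integral>\<^sub>0\<^sup>n (1 - (1 - t/n)\<^sup>n)/t dt\<close> at \<open>t = 1\<close>, subtract \<open>ln n = \<integral>\<^sub>1\<^sup>n dt/t\<close>,
  and let \<open>n \<rightarrow> \<infinity>\<close> using \<open>(1 - t/n)\<^sup>n \<rightarrow> e\<^sup>-\<^sup>t\<close>.
\<close>

definition exp1_tail :: "nat \<Rightarrow> real" where
  "exp1_tail n = exp 1 - (\<Sum>i\<le>n. 1 / fact i)"

lemma sums_inverse_fact: "(\<lambda>n. 1 / fact n) sums (exp 1 :: real)"
  using exp_converges[of "1::real"] by (simp add: divide_inverse)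

lemma exp1_tail_sums: "(\<lambda>j. 1 / fact (j + Suc n)) sums exp1_tail n"
  using sums_iff_shift[of "\<lambda>j. 1 / fact j :: real" "Suc n" "exp1_tail n"] sums_inverse_fact
  by (simp add: exp1_tail_def lessThan_Suc_atMost)

lemma exp1_tail_pos: "exp1_tail n > 0"
proof -
  have "0 < (\<Sum>j. 1 / fact (j + Suc n) :: real)"
    using exp1_tail_sums[of n] by (intro suminf_pos) (auto simp: sums_iff)
  then show ?thesis
    using exp1_tail_sums[of n] sums_unique by metis
qed

lemma exp1_tail_diff_Suc: "exp1_tail n - exp1_tail (Suc n) = 1 / fact (Suc n)"
  by (simp add: exp1_tail_def)

lemma fact_mult_power_le_fact: "fact (Suc n) * real (n + 2) ^ j \<le> fact (j + Suc n)"
proof (induction j)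
  case (Suc j)
  have "fact (Suc n) * real (n + 2) ^ Suc j = real (n + 2) * (fact (Suc n) * real (n + 2) ^ j)"
    by (simp add: mult_ac)
  also have "\<dots> \<le> real (Suc j + Suc n) * fact (j + Suc n)"
    using Suc.IH by (intro mult_mono) auto
  finally show ?case by simp
qed simp

lemma exp1_tail_less:
  assumes "n \<ge> 1" shows "exp1_tail n < 1 / fact n"
proof -
  define q :: real where "q = 1 / real (n + 2)"
  have geom: "(\<lambda>j. q ^ j / fact (Suc n)) sums (1 / (1 - q) / fact (Suc n))"
    by (intro sums_divide geometric_sums) (simp add: q_def)
  have "1 / fact (j + Suc n) \<le> q ^ j / fact (Suc n)" for j
  proof -
    have "q ^ j / fact (Suc n) = 1 / (fact (Suc n) * real (n + 2) ^ j)"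
      by (simp add: q_def power_one_over)
    then show ?thesis
      using fact_mult_power_le_fact[of n j] by (simp add: frac_le del: fact_Suc)
  qed
  then have "exp1_tail n \<le> 1 / (1 - q) / fact (Suc n)"
    using sums_le[OF _ exp1_tail_sums geom] by blast
  also have "\<dots> = (real n + 2) / (real n + 1) ^ 2 / fact n"
    by (simp add: q_def field_simps power2_eq_square)
  also have "\<dots> < 1 / fact n"
  proof -
    have "1 * 1 \<le> real n * real n"
      using assms by (intro mult_mono) auto
    then have "real n + 2 < (real n + 1) ^ 2"
      using assms by (simp add: power2_eq_square algebra_simps)
    then show ?thesis
      by (intro divide_strict_right_mono) auto
  qed
  finally show ?thesis .
qed

lemma frac_fact_mult_exp1:
  assumes "n \<ge> 1" shows "frac (fact n * exp 1) = fact n * exp1_tail n"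
proof -
  have "fact n * exp 1 = (\<Sum>i\<le>n. fact n / fact i) + fact n * exp1_tail n"
    by (simp add: exp1_tail_def sum_distrib_left algebra_simps)
  moreover have "(\<Sum>i\<le>n. fact n / fact i :: real) \<in> \<int>"
  proof (intro Ints_sum)
    fix i assume "i \<in> {..n}"
    then have "fact i dvd (fact n :: nat)" by (simp add: fact_dvd)
    then have "(fact n / fact i :: real) = of_nat (fact n div fact i)"
      by (simp add: real_of_nat_div of_nat_fact)
    then show "(fact n / fact i :: real) \<in> \<int>" by simp
  qed
  moreover have "0 \<le> fact n * exp1_tail n" "fact n * exp1_tail n < 1"
    using exp1_tail_pos[of n] exp1_tail_less[OF assms] by (auto simp: field_simps)
  ultimately show ?thesis by (simp add: frac_add_int_left frac_eq)
qed

lemma sum_atMost_by_parts: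
  fixes a r :: "nat \<Rightarrow> 'a::ring"
  shows "(\<Sum>n\<le>N. a n * r n)
           = (\<Sum>n\<le>N. (\<Sum>k\<le>n. a k) * (r n - r (Suc n))) + (\<Sum>k\<le>N. a k) * r (Suc N)"
proof (induction N)
  case (Suc N)
  then show ?case by (simp add: distrib_left distrib_right right_diff_distrib)
qed (simp add: right_diff_distrib)

lemma sums_by_parts:
  fixes a r :: "nat \<Rightarrow> 'a::{ring, topological_monoid_add}"
  assumes "(\<lambda>n. (\<Sum>k\<le>n. a k) * (r n - r (Suc n))) sums s"
    and "(\<lambda>n. (\<Sum>k\<le>n. a k) * r (Suc n)) \<longlonglongrightarrow> 0"
  shows "(\<lambda>n. a n * r n) sums s"
proof -
  have "(\<lambda>N. (\<Sum>n\<le>N. (\<Sum>k\<le>n. a k) * (r n - r (Suc n))) + (\<Sum>k\<le>N. a k) * r (Suc N)) \<longlonglongrightarrow> s + 0"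
    using assms unfolding sums_def_le by (rule tendsto_add)
  then show ?thesis
    by (simp add: sums_def_le flip: sum_atMost_by_parts)
qed

definition log_series :: "nat \<Rightarrow> real \<Rightarrow> real" where
  "log_series m x = (\<Sum>j<m. x ^ Suc j / real (Suc j))"

lemma log_series_zero [simp]: "log_series m 0 = 0"
  by (simp add: log_series_def)

lemma log_series_one: "log_series m 1 = harm m"
  by (simp add: log_series_def harm_altdef divide_inverse)

lemma log_series_minus_one: "log_series m (-1) = - alt_harm m"
  by (induction m) (simp_all add: log_series_def alt_harm_def)

lemma has_real_derivative_log_series:
  "(log_series m has_real_derivative (\<Sum>j<m. x ^ j)) (at x)"
proof -
  have "((\<lambda>x. x ^ Suc j / real (Suc j)) has_real_derivative x ^ j) (at x)" for j
    using DERIV_cdivide[OF DERIV_pow[of "Suc j" x], of "real (Suc j)"] by (simp del: of_nat_Suc)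
  then show ?thesis
    unfolding log_series_def by (rule DERIV_sum)
qed

lemma has_integral_one_minus_power_div:
  fixes a b c :: real
  assumes "c \<noteq> 0" "a \<le> b"
  shows "((\<lambda>t. (1 - (1 - t / c) ^ m) / t) has_integral
           log_series m (1 - a / c) - log_series m (1 - b / c)) {a..b}"
proof -
  define F where "F = (\<lambda>t. - log_series m (1 - t / c))"
  have "(F has_real_derivative (\<Sum>j<m. (1 - t / c) ^ j) / c) (at t)" for t
  proof -
    have "((\<lambda>t. 1 - t / c) has_real_derivative - 1 / c) (at t)"
      using assms(1) by (auto intro!: derivative_eq_intros)
    from DERIV_minus[OF DERIV_chain2[OF has_real_derivative_log_series this]]
    show ?thesis by (simp add: F_def)
  qed
  then have "((\<lambda>t. (\<Sum>j<m. (1 - t / c) ^ j) / c) has_integral F b - F a) {a..b}"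
    using assms(2) by (intro fundamental_theorem_of_calculus)
      (auto simp flip: has_real_derivative_iff_has_vector_derivative intro: has_field_derivative_at_within)
  then have poly: "((\<lambda>t. (\<Sum>j<m. (1 - t / c) ^ j) / c) has_integral
      log_series m (1 - a / c) - log_series m (1 - b / c)) {a..b}"
    by (simp add: F_def)
  show ?thesis
  proof (rule has_integral_spike_finite[OF _ _ poly])
    show "finite {0 :: real}" by simp
    fix t assume "t \<in> {a..b} - {0}"
    moreover have "1 - (1 - t / c) ^ m = (1 - (1 - t / c)) * (\<Sum>j<m. (1 - t / c) ^ j)"
      by (rule one_diff_power_eq)
    ultimately show "(1 - (1 - t / c) ^ m) / t = (\<Sum>j<m. (1 - t / c) ^ j) / c"
      using assms(1) by simp
  qed
qed

lemma alt_harm_has_integral: "((\<lambda>t. (1 - (1 - t) ^ m) / t) has_integral alt_harm m) {1..2}"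
  using has_integral_one_minus_power_div[of 1 1 2 m] by (simp add: log_series_minus_one)

text \<open>The second integral is shifted by one so that its integrand tends to that of
  \<open>euler_gompertz\<close>, up to the factor \<open>exp (- 1)\<close>.\<close>
lemma harm_minus_ln_eq:
  assumes "n \<ge> 1"
  shows "harm n - ln n = integral {0..1} (\<lambda>t. (1 - (1 - t / n) ^ n) / t)
           - integral {0..real n - 1} (\<lambda>x. (1 - (1 + x) / n) ^ n / (1 + x))"
proof -
  let ?P = "log_series n (1 - 1 / n)"
  have n: "real n \<noteq> 0" "1 \<le> real n" using assms by auto
  have head: "((\<lambda>t. (1 - (1 - t / n) ^ n) / t) has_integral harm n - ?P) {0..1}"
    using has_integral_one_minus_power_div[OF n(1), of 0 1 n] by (simp add: log_series_one)
  have body: "((\<lambda>t. (1 - (1 - t / n) ^ n) / t) has_integral ?P) {1..n}"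
    using has_integral_one_minus_power_div[OF n(1), of 1 n n] n by simp
  have "((\<lambda>t. 1 / t) has_integral ln n - ln 1) {1..n}"
    using n by (intro fundamental_theorem_of_calculus)
      (auto simp flip: has_real_derivative_iff_has_vector_derivative
        intro!: has_field_derivative_at_within DERIV_ln_divide)
  from has_integral_diff[OF this body]
  have "((\<lambda>t. (1 - t / n) ^ n / t) has_integral ln n - ?P) {1..n}"
    by (simp add: diff_divide_distrib)
  from has_integral_shift_real_ivl[OF this, of 1]
  have "((\<lambda>x. (1 - (1 + x) / n) ^ n / (1 + x)) has_integral ln n - ?P) {0..real n - 1}"
    by (simp add: add.commute)
  with head show ?thesis
    by (simp add: integral_unique)
qed

lemma tendsto_one_minus_div_power: "(\<lambda>n. (1 - t / real n) ^ n) \<longlonglongrightarrow> exp (- t)"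
  using tendsto_exp_limit_sequentially[of "- t"] by simp

lemma one_minus_div_power_le_exp:
  assumes "0 \<le> t" "t \<le> real n"
  shows "(1 - t / real n) ^ n \<le> exp (- t)"
proof (cases "n = 0")
  case False
  have "0 \<le> 1 - t / n"
    using assms False by (simp add: field_simps)
  then have "(1 - t / n) ^ n \<le> exp (- t / n) ^ n"
    using exp_ge_add_one_self[of "- t / n"] by (intro power_mono) auto
  also have "\<dots> = exp (- t)"
    using False by (simp flip: exp_of_nat_mult)
  finally show ?thesis .
qed (use assms in simp)

lemma abs_one_minus_power_div_le_one:
  assumes "n \<ge> 1" "t \<in> {0..1}"
  shows "\<bar>(1 - (1 - t / real n) ^ n) / t\<bar> \<le> 1"
proof -
  have q: "0 \<le> 1 - t / n" "1 - t / n \<le> 1"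
    using assms by (auto simp: field_simps)
  have "1 + real n * (- t / n) \<le> (1 + - t / n) ^ n"
    using q by (intro Bernoulli_inequality) simp
  then have "1 - t \<le> (1 - t / n) ^ n"
    using assms(1) by simp
  moreover have "(1 - t / n) ^ n \<le> 1"
    using q by (rule power_le_one)
  ultimately show ?thesis
    using assms(2) by (auto simp: abs_divide divide_le_eq_1)
qed

lemma Ein_one_limit:
  shows "(\<lambda>t::real. (1 - exp (- t)) / t) integrable_on {0..1}"
    and "(\<lambda>n. integral {0..1} (\<lambda>t. (1 - (1 - t / n) ^ n) / t)) \<longlonglongrightarrow> Ein 1"
proof -
  define f where "f = (\<lambda>k t. (1 - (1 - t / Suc k) ^ Suc k) / t)"
  have f_int: "f k integrable_on {0..1}" for k
    unfolding f_def by (rule has_integral_integrable[OF has_integral_one_minus_power_div]) auto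
  have one_int: "(\<lambda>t::real. 1::real) integrable_on {0..1}"
    by (rule integrable_const_ivl)
  have f_le: "norm (f k t) \<le> 1" if "t \<in> {0..1}" for k t
    using abs_one_minus_power_div_le_one[of "Suc k" t] that by (simp add: f_def)
  have f_lim: "(\<lambda>k. f k t) \<longlonglongrightarrow> (1 - exp (- t)) / t" for t
    unfolding f_def divide_inverse[of _ t]
    by (intro tendsto_mult_right tendsto_diff tendsto_const LIMSEQ_Suc[OF tendsto_one_minus_div_power])
  show "(\<lambda>t::real. (1 - exp (- t)) / t) integrable_on {0..1}"
    using f_int one_int f_le f_lim by (rule dominated_convergence(1))
  have "(\<lambda>k. integral {0..1} (f k)) \<longlonglongrightarrow> Ein 1"
    unfolding Ein_def using f_int one_int f_le f_lim by (rule dominated_convergence(2))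
  then show "(\<lambda>n. integral {0..1} (\<lambda>t. (1 - (1 - t / n) ^ n) / t)) \<longlonglongrightarrow> Ein 1"
    unfolding f_def by (rule LIMSEQ_imp_Suc)
qed

lemma tendsto_truncated_gompertz_integral:
  "(\<lambda>n. integral {0..real n - 1} (\<lambda>x. (1 - (1 + x) / n) ^ n / (1 + x)))
     \<longlonglongrightarrow> exp (- 1) * euler_gompertz"
proof -
  define f where "f = (\<lambda>n x. if x \<in> {0..real n - 1} then (1 - (1 + x) / n) ^ n / (1 + x) else 0)"
  define h where "h = (\<lambda>x::real. exp (- 1) * exp (- x))"
  have restrict: "{0..real n - 1} \<inter> {0..} = {0..real n - 1}" for n
    by auto
  have f_integral: "integral {0..} (f n) = integral {0..real n - 1} (\<lambda>x. (1 - (1 + x) / n) ^ n / (1 + x))"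
    for n
    unfolding f_def integral_restrict_Int restrict ..
  have f_int: "f n integrable_on {0..}" for n
  proof -
    have "(\<lambda>x. (1 - (1 + x) / n) ^ n / (1 + x)) integrable_on {0..real n - 1}"
      by (intro integrable_continuous_interval continuous_intros) auto
    then show ?thesis
      unfolding f_def integrable_restrict_Int restrict .
  qed
  have h_int: "h integrable_on {0..}"
    using has_integral_mult_right[OF has_integral_exp_minus_to_infinity[of 1 0], of "exp (- 1)"]
    by (auto simp: h_def)
  have f_le: "norm (f n x) \<le> h x" if "x \<in> {0..}" for n x
  proof (cases "x \<le> real n - 1")
    case True
    then have x: "0 \<le> x" "1 + x \<le> real n" "0 < real n"
      using that by auto
    then have q: "0 \<le> 1 - (1 + x) / n"
      by simp
    have "norm (f n x) = (1 - (1 + x) / n) ^ n / (1 + x)"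
      using True x q by (simp add: f_def)
    also have "\<dots> \<le> (1 - (1 + x) / n) ^ n / 1"
      using x q by (intro divide_left_mono) auto
    also have "\<dots> \<le> exp (- (1 + x))"
      using one_minus_div_power_le_exp[of "1 + x" n] x by simp
    also have "\<dots> = h x"
      by (simp add: h_def flip: exp_add)
    finally show ?thesis .
  qed (simp add: f_def h_def)
  have f_lim: "(\<lambda>n. f n x) \<longlonglongrightarrow> exp (- 1) * (exp (- x) / (1 + x))" if "x \<in> {0..}" for x
  proof -
    have "(\<lambda>n. (1 - (1 + x) / n) ^ n / (1 + x)) \<longlonglongrightarrow> exp (- (1 + x)) / (1 + x)"
      by (intro tendsto_divide tendsto_const tendsto_one_minus_div_power) (use that in auto)
    moreover obtain N :: nat where "1 + x \<le> real N"
      using real_arch_simple by blast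
    then have "\<forall>\<^sub>F n in sequentially. (1 - (1 + x) / n) ^ n / (1 + x) = f n x"
      using that by (intro eventually_sequentiallyI[of N]) (auto simp: f_def)
    ultimately show ?thesis
      by (simp add: tendsto_cong exp_diff exp_minus field_simps flip: exp_add)
  qed
  have "(\<lambda>n. integral {0..} (f n)) \<longlonglongrightarrow> integral {0..} (\<lambda>x. exp (- 1) * (exp (- x) / (1 + x)))"
    using f_int h_int f_le f_lim by (rule dominated_convergence(2))
  moreover have "integral {0..} (\<lambda>x. exp (- 1) * (exp (- x) / (1 + x))) = exp (- 1) * euler_gompertz"
    unfolding euler_gompertz_def by (rule Henstock_Kurzweil_Integration.integral_mult_right)
  ultimately show ?thesis
    by (simp only: f_integral)
qed

lemma euler_mascheroni_eq_Ein_gompertz: "euler_mascheroni = Ein 1 - exp (- 1) * euler_gompertz"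
proof (rule LIMSEQ_unique)
  show "(\<lambda>n. harm n - ln (real n)) \<longlonglongrightarrow> euler_mascheroni"
    by (rule euler_mascheroni_LIMSEQ)
  have "(\<lambda>n. integral {0..1} (\<lambda>t. (1 - (1 - t / n) ^ n) / t)
           - integral {0..real n - 1} (\<lambda>x. (1 - (1 + x) / n) ^ n / (1 + x)))
        \<longlonglongrightarrow> Ein 1 - exp (- 1) * euler_gompertz"
    by (intro tendsto_diff Ein_one_limit tendsto_truncated_gompertz_integral)
  moreover have "\<forall>\<^sub>F n in sequentially. integral {0..1} (\<lambda>t. (1 - (1 - t / n) ^ n) / t)
           - integral {0..real n - 1} (\<lambda>x. (1 - (1 + x) / n) ^ n / (1 + x)) = harm n - ln (real n)"
    using eventually_ge_at_top[of 1] by eventually_elim (simp add: harm_minus_ln_eq)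
  ultimately show "(\<lambda>n. harm n - ln (real n)) \<longlonglongrightarrow> Ein 1 - exp (- 1) * euler_gompertz"
    by (rule Lim_transform_eventually)
qed

lemma Ein_two_minus_Ein_one: "Ein 2 - Ein 1 = integral {1..2} (\<lambda>t. (1 - exp (- t)) / t)"
proof -
  have "(\<lambda>t::real. (1 - exp (- t)) / t) integrable_on {1..2}"
    by (intro integrable_continuous_interval continuous_intros) auto
  then have "((\<lambda>t. (1 - exp (- t)) / t) has_integral
      Ein 1 + integral {1..2} (\<lambda>t. (1 - exp (- t)) / t)) {0..2}"
    unfolding Ein_def using Ein_one_limit(1)
    by (intro has_integral_combine[of 0 1 2] integrable_integral) auto
  then show ?thesis
    by (simp add: Ein_def integral_unique)
qed

lemma abs_one_minus_power_div_le_two: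
  fixes t :: real
  assumes "t \<in> {1..2}"
  shows "\<bar>(1 - (1 - t) ^ m) / t\<bar> \<le> 2"
proof -
  have "\<bar>(1 - t) ^ m\<bar> \<le> 1"
    using assms by (simp add: power_abs power_le_one)
  then have "\<bar>1 - (1 - t) ^ m\<bar> \<le> 2"
    by linarith
  moreover have "\<bar>(1 - (1 - t) ^ m) / t\<bar> \<le> \<bar>1 - (1 - t) ^ m\<bar>"
    using assms by (simp add: abs_divide divide_le_eq mult_le_cancel_left1)
  ultimately show ?thesis
    by linarith
qed

lemma sums_alt_harm_div_fact: "(\<lambda>m. alt_harm m / fact m) sums (exp 1 * (Ein 2 - Ein 1))"
proof -
  define F where "F = (\<lambda>N (t::real). \<Sum>m<N. (1 - (1 - t) ^ m) / t / fact m)"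
  have F_integral: "(F N has_integral (\<Sum>m<N. alt_harm m / fact m)) {1..2}" for N
    unfolding F_def by (intro has_integral_sum has_integral_divide alt_harm_has_integral) simp
  have const_int: "(\<lambda>t::real. 2 * exp 1) integrable_on {1..2}"
    by (rule integrable_const_ivl)
  have F_le: "norm (F N t) \<le> 2 * exp 1" if "t \<in> {1..2}" for N t
  proof -
    have "norm (F N t) \<le> (\<Sum>m<N. \<bar>(1 - (1 - t) ^ m) / t\<bar> / fact m)"
      unfolding F_def real_norm_def by (rule order_trans[OF sum_abs]) (simp add: abs_divide abs_mult)
    also have "\<dots> \<le> (\<Sum>m<N. 2 / fact m)"
      using abs_one_minus_power_div_le_two[OF that]
      by (intro sum_mono divide_right_mono) auto
    also have "\<dots> = 2 * (\<Sum>m<N. 1 / fact m)"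
      by (simp add: sum_distrib_left)
    also have "\<dots> \<le> 2 * exp 1"
      using sum_le_suminf[of "\<lambda>m. 1 / fact m :: real" "{..<N}"] sums_inverse_fact
      by (simp add: sums_iff)
    finally show ?thesis .
  qed
  have F_lim: "(\<lambda>N. F N t) \<longlonglongrightarrow> exp 1 * ((1 - exp (- t)) / t)" if "t \<in> {1..2}" for t
  proof -
    have "(\<lambda>m. (1 - t) ^ m / fact m) sums exp (1 - t)"
      using exp_converges[of "1 - t"] by (simp add: divide_inverse mult.commute)
    then have "(\<lambda>m. (1 / fact m - (1 - t) ^ m / fact m) / t) sums ((exp 1 - exp (1 - t)) / t)"
      by (intro sums_divide sums_diff sums_inverse_fact)
    moreover have "(exp 1 - exp (1 - t)) / t = exp 1 * ((1 - exp (- t)) / t)"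
      by (simp add: exp_diff field_simps exp_minus)
    moreover have "(1 / fact m - (1 - t) ^ m / fact m) / t = (1 - (1 - t) ^ m) / t / fact m" for m
      by (simp add: diff_divide_distrib mult.commute)
    ultimately show ?thesis
      unfolding F_def by (simp add: sums_def)
  qed
  have "(\<lambda>N. integral {1..2} (F N)) \<longlonglongrightarrow> integral {1..2} (\<lambda>t. exp 1 * ((1 - exp (- t)) / t))"
    using _ const_int F_le F_lim by (rule dominated_convergence(2)) (use F_integral in blast)
  moreover have "integral {1..2} (\<lambda>t. exp 1 * ((1 - exp (- t)) / t)) = exp 1 * (Ein 2 - Ein 1)"
    unfolding Ein_two_minus_Ein_one by (rule Henstock_Kurzweil_Integration.integral_mult_right)
  ultimately show ?thesis
    by (simp only: sums_def integral_unique[OF F_integral])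
qed

lemma alt_harm_0 [simp]: "alt_harm 0 = 0"
  by (simp add: alt_harm_def)

lemma sum_alt_harm_atMost:
  "(\<Sum>j\<le>n. alt_harm j) = (n + 1) * alt_harm n - (if odd n then 1 else 0)"
proof (induction n)
  case (Suc n)
  have "alt_harm (Suc n) = alt_harm n + (-1) ^ n / (n + 1)"
    by (simp add: alt_harm_def)
  with Suc show ?case
    by (cases "even n") (simp_all add: field_simps)
qed simp

lemma sums_cosh_one_tail: "(\<lambda>n. if even n then 1 / fact (Suc (Suc n)) else 0) sums (cosh 1 - 1 :: real)"
proof -
  define f :: "nat \<Rightarrow> real" where "f = (\<lambda>n. if even n then 1 / fact n else 0)"
  have "(\<lambda>n. if even n then 1 ^ n /\<^sub>R fact n else 0) = f"
    by (simp add: f_def fun_eq_iff divide_inverse)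
  then have "f sums cosh 1"
    using cosh_converges[of "1 :: real"] by simp
  then have "(\<lambda>n. f (n + 2)) sums (cosh 1 - (\<Sum>n<2. f n))"
    by (simp only: sums_iff_shift')
  moreover have "(\<Sum>n<2. f n) = 1"
    by (simp add: f_def numeral_2_eq_2)
  moreover have "f (n + 2) = (if even n then 1 / fact (Suc (Suc n)) else 0)" for n
  proof -
    have "n + 2 = Suc (Suc n)"
      by simp
    then show ?thesis
      by (simp add: f_def del: fact_Suc)
  qed
  ultimately show ?thesis
    by simp
qed

lemma sum_alt_harm_mult_exp1_tail_diff:
  "(\<Sum>k\<le>n. alt_harm (Suc k)) * (exp1_tail (Suc n) - exp1_tail (Suc (Suc n)))
     = alt_harm (Suc n) / fact (Suc n) - (if even n then 1 / fact (Suc (Suc n)) else 0)"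
proof -
  define d where "d = real n + 2"
  define F :: real where "F = fact (Suc n)"
  have "(\<Sum>k\<le>n. alt_harm (Suc k)) = d * alt_harm (Suc n) - (if even n then 1 else 0)"
    using sum_alt_harm_atMost[of "Suc n"] unfolding sum.atMost_Suc_shift d_def by simp
  moreover have "d > 0" "F > 0"
    by (simp_all add: d_def F_def del: fact_Suc)
  then have "(d * alt_harm (Suc n) - e) * (1 / (d * F)) = alt_harm (Suc n) / F - e / (d * F)" for e
    by (simp add: field_simps)
  moreover have "fact (Suc (Suc n)) = d * F"
    by (simp add: d_def F_def)
  ultimately show ?thesis
    unfolding exp1_tail_diff_Suc by (simp add: F_def del: fact_Suc)
qed

lemma sums_alt_harm_mult_exp1_tail:
  assumes "(\<lambda>m. alt_harm m / fact m) sums L"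
  shows "(\<lambda>n. alt_harm (Suc n) * exp1_tail (Suc n)) sums (L - (cosh 1 - 1))"
proof (rule sums_by_parts)
  define S where "S n = (\<Sum>k\<le>n. alt_harm (Suc k))" for n
  have "(\<lambda>n. alt_harm (Suc n) / fact (Suc n)) sums L"
    using assms sums_Suc_iff[of "\<lambda>m. alt_harm m / fact m" L] by (simp del: fact_Suc)
  then have sums: "(\<lambda>n. S n * (exp1_tail (Suc n) - exp1_tail (Suc (Suc n)))) sums (L - (cosh 1 - 1))"
    unfolding S_def sum_alt_harm_mult_exp1_tail_diff by (rule sums_diff[OF _ sums_cosh_one_tail])
  then show "(\<lambda>n. (\<Sum>k\<le>n. alt_harm (Suc k)) * (exp1_tail (Suc n) - exp1_tail (Suc (Suc n))))
      sums (L - (cosh 1 - 1))"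
    by (simp only: S_def)
  text \<open>The boundary term is dominated by the summand, because \<open>r\<^sub>n\<^sub>+\<^sub>2 < 1/(n + 2)! = r\<^sub>n\<^sub>+\<^sub>1 - r\<^sub>n\<^sub>+\<^sub>2\<close>.\<close>
  show "(\<lambda>n. (\<Sum>k\<le>n. alt_harm (Suc k)) * exp1_tail (Suc (Suc n))) \<longlonglongrightarrow> 0"
    unfolding S_def[symmetric]
  proof (rule Lim_null_comparison)
    show "(\<lambda>n. \<bar>S n * (exp1_tail (Suc n) - exp1_tail (Suc (Suc n)))\<bar>) \<longlonglongrightarrow> 0"
      using summable_LIMSEQ_zero[OF sums_summable[OF sums]] by (rule tendsto_rabs_zero)
    have "\<bar>exp1_tail (Suc (Suc n))\<bar> \<le> \<bar>exp1_tail (Suc n) - exp1_tail (Suc (Suc n))\<bar>" for n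
      using exp1_tail_pos[of "Suc (Suc n)"] exp1_tail_less[of "Suc (Suc n)"]
      by (simp only: exp1_tail_diff_Suc) simp
    then show "\<forall>\<^sub>F n in sequentially. norm (S n * exp1_tail (Suc (Suc n)))
        \<le> \<bar>S n * (exp1_tail (Suc n) - exp1_tail (Suc (Suc n)))\<bar>"
      by (intro always_eventually allI) (simp add: abs_mult mult_left_mono)
  qed
qed

theorem mainTheorem9:
  shows "(\<lambda>n. alt_harm (Suc n) * frac (fact (Suc n) * exp 1) / fact (Suc n)) sums
           (exp 1 * (Ein 2 - euler_mascheroni) - cosh 1 - euler_gompertz + 1)"
proof -
  have frac: "(\<lambda>n. alt_harm (Suc n) * frac (fact (Suc n) * exp 1) / fact (Suc n))
      = (\<lambda>n. alt_harm (Suc n) * exp1_tail (Suc n))"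
    by (simp add: frac_fact_mult_exp1 del: fact_Suc)
  have closed_form: "exp 1 * (Ein 2 - Ein 1) - (cosh 1 - 1)
      = exp 1 * (Ein 2 - euler_mascheroni) - cosh 1 - euler_gompertz + 1"
    by (simp add: euler_mascheroni_eq_Ein_gompertz algebra_simps exp_minus)
  show ?thesis
    unfolding frac closed_form[symmetric]
    by (rule sums_alt_harm_mult_exp1_tail[OF sums_alt_harm_div_fact])
qed

end
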